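(* Let $r\ge2$, $d=r-1$, and let $s_1,\dots,s_r$ be independent indeterminates over $\mathbb{Q}$, $s_0=1$, $s_i=0$ for $i<0$ or $i>r$, $f(x)=x^r+s_1x^{r-1}+\cdots+s_r$. Define $d\times d$ matrices $X_1,X_2,X_3,X_4$ by: $(X_1)_{i,j}=(j-i)s_{r-(j-i)}$ if $j\ge i$ and $0$ otherwise; $(X_2)_{i,j}=s_{i-j}$; $(X_3)_{i,j}=s_{r-(j-i)}$ if $j\ge i$ and $0$ otherwise; $(X_4)_{i,j}=(r-(i-j))s_{i-j}$ if $i\ge j$ and $0$ otherwise. Let $u$ be the column vector with $i$-th entry $(r-i)s_i$ and $w$ the row vector with $j$-th entry $(r-j)s_{r-j}$ ($1\le i,j\le d$). Then \[ -X_1X_2+X_3X_4-\frac1r\,u\,w=J\,\mathrm{Bez}\Bigl(f'(x),\,f(x)-\tfrac1r xf'(x)\Bigr), \] where $J$ is the $d\times d$ matrix with ones on the antidiagonal and zeros elsewhere.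
   Context: For polynomials $F,G$ with $D=\max(\deg F,\deg G)$, the Bézout matrix $\mathrm{Bez}(F,G)$ is the $D\times D$ matrix defined by $\frac{F(x)G(y)-F(y)G(x)}{x-y}=(1,x,\ldots,x^{D-1})\,\mathrm{Bez}(F,G)\,(1,y,\ldots,y^{D-1})^T$. Here $f'(x)$ has degree $r-1$ and $f(x)-\frac1r xf'(x)$ has degree at most $r-1$, so the Bézout matrix is $(r-1)\times(r-1)$. *)

theory Defs
  imports "HOL-Computational_Algebra.Polynomial" "Jordan_Normal_Form.Matrix"
begin

text \<open>Bivariate polynomials are represented as 'a poly poly: the outer variable is y,
  the inner variable (inside the coefficients) is x.\<close>

definition bez_poly :: "'a::field poly \<Rightarrow> 'a poly \<Rightarrow> 'a poly poly" where
  "bez_poly F G =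
     ([:F:] * map_poly (\<lambda>c. [:c:]) G - [:G:] * map_poly (\<lambda>c. [:c:]) F)
       div [:[:0, 1:], -1:]"
  \<comment> \<open>(F(x)G(y) - F(y)G(x)) / (x - y)\<close>

text \<open>Bezout matrix, 0-indexed: entry (i,j) is the coefficient of x^i y^j.\<close>
definition bezout_matrix :: "'a::field poly \<Rightarrow> 'a poly \<Rightarrow> 'a mat" where
  "bezout_matrix F G =
     (let D = max (degree F) (degree G)
      in mat D D (\<lambda>(i, j). coeff (coeff (bez_poly F G) j) i))"

definition sx :: "nat \<Rightarrow> (nat \<Rightarrow> 'a::field) \<Rightarrow> int \<Rightarrow> 'a" where
  "sx r s k = (if k = 0 then 1 else if 1 \<le> k \<and> k \<le> int r then s (nat k) else 0)"

definition fpoly :: "nat \<Rightarrow> (nat \<Rightarrow> 'a::field) \<Rightarrow> 'a poly" where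
  "fpoly r s = (\<Sum>i\<le>r. monom (sx r s (int i)) (r - i))"

text \<open>Matrices of the paper (paper indices i,j in 1..d correspond to i+1, j+1 here).\<close>
definition X1 :: "nat \<Rightarrow> (nat \<Rightarrow> 'a::field) \<Rightarrow> 'a mat" where
  "X1 r s = mat (r - 1) (r - 1) (\<lambda>(i, j).
     if j \<ge> i then of_int (int j - int i) * sx r s (int r - (int j - int i)) else 0)"

definition X2 :: "nat \<Rightarrow> (nat \<Rightarrow> 'a::field) \<Rightarrow> 'a mat" where
  "X2 r s = mat (r - 1) (r - 1) (\<lambda>(i, j). sx r s (int i - int j))"

definition X3 :: "nat \<Rightarrow> (nat \<Rightarrow> 'a::field) \<Rightarrow> 'a mat" where
  "X3 r s = mat (r - 1) (r - 1) (\<lambda>(i, j).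
     if j \<ge> i then sx r s (int r - (int j - int i)) else 0)"

definition X4 :: "nat \<Rightarrow> (nat \<Rightarrow> 'a::field) \<Rightarrow> 'a mat" where
  "X4 r s = mat (r - 1) (r - 1) (\<lambda>(i, j).
     if i \<ge> j then of_int (int r - (int i - int j)) * sx r s (int i - int j) else 0)"

definition ucol :: "nat \<Rightarrow> (nat \<Rightarrow> 'a::field) \<Rightarrow> 'a mat" where
  "ucol r s = mat (r - 1) 1 (\<lambda>(i, _). of_int (int r - int (i+1)) * sx r s (int (i+1)))"

definition wrow :: "nat \<Rightarrow> (nat \<Rightarrow> 'a::field) \<Rightarrow> 'a mat" where
  "wrow r s = mat 1 (r - 1) (\<lambda>(_, j). of_int (int r - int (j+1)) * sx r s (int r - int (j+1)))"

definition antidiag :: "nat \<Rightarrow> 'a::field mat" where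
  "antidiag d = mat d d (\<lambda>(i, j). if i + j + 1 = d then 1 else 0)"

end

theory Submission
  imports Defs
begin

text \<open>
  Index rows and columns from 0 and put d = r - 1, F = f', G = f - x f'/r. Expanding the products,
  the (i,j) entry of the left-hand side is M(i,j) = \<Sum>k<d. g(i,j,k) - u_i w_j / r with
  g(i,j,k) = (r+i+j-2k) s_(r+i-k) s_(k-j). The Bezoutian B is the polynomial with
  (x - y) B(x,y) = F(x) G(y) - G(x) F(y), i.e. B_(a-1,b) - B_(a,b-1) = F_a G_b - G_a F_b on
  coefficients; after the row reversal by J this becomes a recurrence along the diagonals of M.
  It holds because g(i+1,j+1,k+1) = g(i,j,k), so M(i+1,j+1) - M(i,j) only involves the term
  k = d and the u w correction. On the border i = 0 or j = 0, the antisymmetry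
  g(i,j,r+i+j-k) = -g(i,j,k) makes the full sum over k vanish, and since g vanishes for k > r
  this expresses M(i,j) through the two terms k = d and k = r.
\<close>

lemma sx_outside: "k < 0 \<or> int r < k \<Longrightarrow> sx r s k = 0"
  by (auto simp: sx_def)

lemma sum_atMost_eq_0_if_antisymmetric:
  fixes f :: "nat \<Rightarrow> 'a::{idom, ring_char_0}"
  assumes "\<And>k. k \<le> n \<Longrightarrow> f (n - k) = - f k"
  shows "(\<Sum>k\<le>n. f k) = 0"
proof -
  have "(\<Sum>k\<le>n. f k) = (\<Sum>k\<le>n. f (n - k))"
    using sum.atLeastAtMost_rev[of f 0 n] by (simp add: atLeast0AtMost)
  also have "\<dots> = - (\<Sum>k\<le>n. f k)"
    by (simp add: assms sum_negf)
  finally show ?thesis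
    by (simp add: eq_neg_iff_add_eq_0 flip: mult_2)
qed

lemma coeff_fpoly: "coeff (fpoly r s) n = (if n \<le> r then sx r s (int r - int n) else 0)"
proof -
  have "coeff (fpoly r s) n = (\<Sum>i\<le>r. if i = r - n \<and> n \<le> r then sx r s (int i) else 0)"
    unfolding fpoly_def coeff_sum coeff_monom by (rule sum.cong) auto
  then show ?thesis
    by (simp add: of_nat_diff)
qed

lemma coeff_pderiv_fpoly:
  "coeff (pderiv (fpoly r s)) n = (if n < r then of_nat (n + 1) * sx r s (int r - int n - 1) else 0)"
  by (simp add: coeff_pderiv coeff_fpoly algebra_simps)

abbreviation gpoly :: "nat \<Rightarrow> (nat \<Rightarrow> 'a::field_char_0) \<Rightarrow> 'a poly" where
  "gpoly r s \<equiv> fpoly r s - Polynomial.smult (1 / of_nat r) ([:0, 1:] * pderiv (fpoly r s))"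

lemma coeff_gpoly:
  assumes "r \<noteq> 0"
  shows "coeff (gpoly r s) n
    = (if n \<le> r then (of_nat r - of_nat n) / of_nat r * sx r s (int r - int n) else 0)"
  using assms by (cases n) (simp_all add: coeff_fpoly coeff_pderiv_fpoly field_simps)

lemma degree_pderiv_fpoly:
  assumes "r \<ge> 1"
  shows "degree (pderiv (fpoly r s :: 'a::field_char_0 poly)) = r - 1"
proof (rule antisym)
  show "degree (pderiv (fpoly r s)) \<le> r - 1"
    by (rule degree_le) (auto simp: coeff_pderiv_fpoly)
  show "r - 1 \<le> degree (pderiv (fpoly r s))"
    by (rule le_degree) (use assms in \<open>simp add: coeff_pderiv_fpoly sx_def of_nat_diff\<close>)
qed

lemma degree_gpoly_le:
  assumes "r \<ge> 1"
  shows "degree (gpoly r s) \<le> r - 1"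
proof (rule degree_le, intro allI impI)
  fix n assume "r - 1 < n"
  then show "coeff (gpoly r s) n = 0"
    using assms by (subst coeff_gpoly) auto
qed

definition bipoly :: "nat \<Rightarrow> (nat \<Rightarrow> nat \<Rightarrow> 'a::comm_monoid_add) \<Rightarrow> 'a poly poly" where
  "bipoly n c = (\<Sum>b<n. monom (\<Sum>a<n. monom (c a b) a) b)"

lemma coeff_bipoly: "coeff (coeff (bipoly n c) b) a = (if a < n \<and> b < n then c a b else 0)"
  by (simp add: bipoly_def coeff_sum coeff_monom sum.delta)

lemma bez_poly_eqI:
  fixes F G :: "'a::field poly" and Q :: "'a poly poly"
  assumes "\<And>a b. (if a = 0 then 0 else coeff (coeff Q b) (a - 1))
                  - (if b = 0 then 0 else coeff (coeff Q (b - 1)) a)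
                = coeff F a * coeff G b - coeff G a * coeff F b"
  shows "bez_poly F G = Q"
proof -
  have numerator: "[:F:] * map_poly (\<lambda>c. [:c:]) G - [:G:] * map_poly (\<lambda>c. [:c:]) F = [:[:0, 1:], -1:] * Q"
  proof (intro poly_eqI)
    fix a b
    show "coeff (coeff ([:F:] * map_poly (\<lambda>c. [:c:]) G - [:G:] * map_poly (\<lambda>c. [:c:]) F) b) a
        = coeff (coeff ([:[:0, 1:], -1:] * Q) b) a"
      using assms[of a b] by (cases a; cases b) (simp_all add: coeff_map_poly)
  qed
  show ?thesis
    unfolding bez_poly_def numerator by (rule nonzero_mult_div_cancel_left) simp
qed

lemma bezout_matrix_eq_mat:
  assumes "max (degree F) (degree G) = n" and "bez_poly F G = bipoly n c"
  shows "bezout_matrix F G = mat n n (\<lambda>(i, j). c i j)"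
  by (rule eq_matI) (auto simp: bezout_matrix_def assms coeff_bipoly)

lemma antidiag_mult_mat:
  "antidiag n * mat n m (\<lambda>(i, j). c (n - 1 - i) j) = mat n m (\<lambda>(i, j). c i j)"
proof (rule eq_matI)
  fix i j assume "i < dim_row (mat n m (\<lambda>(i, j). c i j))" "j < dim_col (mat n m (\<lambda>(i, j). c i j))"
  then have ij: "i < n" "j < m" by simp_all
  have "(antidiag n * mat n m (\<lambda>(i, j). c (n - 1 - i) j)) $$ (i, j)
      = (\<Sum>k<n. (if i + k + 1 = n then 1 else 0) * c (n - 1 - k) j)"
    using ij by (simp add: antidiag_def scalar_prod_def atLeast0LessThan)
  also have "\<dots> = (\<Sum>k<n. if k = n - 1 - i then c (n - 1 - k) j else 0)"
    using ij by (intro sum.cong) auto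
  also have "\<dots> = c i j"
    using ij by simp
  finally show "(antidiag n * mat n m (\<lambda>(i, j). c (n - 1 - i) j)) $$ (i, j) = mat n m (\<lambda>(i, j). c i j) $$ (i, j)"
    using ij by simp
qed (simp_all add: antidiag_def)

definition lhs_summand :: "nat \<Rightarrow> (nat \<Rightarrow> 'a::field) \<Rightarrow> nat \<Rightarrow> nat \<Rightarrow> nat \<Rightarrow> 'a" where
  "lhs_summand r s i j k =
     of_int (int r + int i + int j - 2 * int k) * sx r s (int r + int i - int k) * sx r s (int k - int j)"

definition lhs_entry :: "nat \<Rightarrow> (nat \<Rightarrow> 'a::field) \<Rightarrow> nat \<Rightarrow> nat \<Rightarrow> 'a" where
  "lhs_entry r s i j = (\<Sum>k<r - 1. lhs_summand r s i j k)
     - of_int (int r - int i - 1) * sx r s (int i + 1) * (of_int (int r - int j - 1) * sx r s (int r - int j - 1))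
       / of_nat r"

definition cross_term :: "nat \<Rightarrow> (nat \<Rightarrow> 'a::field) \<Rightarrow> nat \<Rightarrow> nat \<Rightarrow> 'a" where
  "cross_term r s i j =
     (of_int ((int r - int i) * (int r - int j)) * sx r s (int i) * sx r s (int r - int j)
      - of_int ((int i + 1) * (int j + 1)) * sx r s (int i + 1) * sx r s (int r - int j - 1)) / of_nat r"

lemma lhs_eq_mat:
  "- (X1 r s * X2 r s) + X3 r s * X4 r s - (1 / of_nat r) \<cdot>\<^sub>m (ucol r s * wrow r s)
     = mat (r - 1) (r - 1) (\<lambda>(i, j). lhs_entry r s i j)"
proof (rule eq_matI)
  fix i j assume "i < dim_row (mat (r - 1) (r - 1) (\<lambda>(i, j). lhs_entry r s i j))"
    "j < dim_col (mat (r - 1) (r - 1) (\<lambda>(i, j). lhs_entry r s i j))"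
  then have ij: "i < r - 1" "j < r - 1" by simp_all
  have summand: "- (X1 r s $$ (i, k) * X2 r s $$ (k, j)) + X3 r s $$ (i, k) * X4 r s $$ (k, j)
      = lhs_summand r s i j k" if "k < r - 1" for k
    using ij that by (cases "j \<le> k"; cases "i \<le> k")
      (simp_all add: X1_def X2_def X3_def X4_def lhs_summand_def sx_outside algebra_simps)
  have "(- (X1 r s * X2 r s) + X3 r s * X4 r s - (1 / of_nat r) \<cdot>\<^sub>m (ucol r s * wrow r s)) $$ (i, j)
      = (\<Sum>k<r - 1. - (X1 r s $$ (i, k) * X2 r s $$ (k, j)) + X3 r s $$ (i, k) * X4 r s $$ (k, j))
        - (1 / of_nat r) * (ucol r s $$ (i, 0) * wrow r s $$ (0, j))"
    using ij by (simp add: X1_def X2_def X3_def X4_def ucol_def wrow_def scalar_prod_def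
        sum.distrib sum_negf sum_subtractf atLeast0LessThan)
  also have "\<dots> = lhs_entry r s i j"
    unfolding lhs_entry_def
  proof (rule arg_cong2[where f = "(-)"])
    show "(\<Sum>k<r - 1. - (X1 r s $$ (i, k) * X2 r s $$ (k, j)) + X3 r s $$ (i, k) * X4 r s $$ (k, j))
        = (\<Sum>k<r - 1. lhs_summand r s i j k)"
      using summand by (intro sum.cong) simp_all
    show "1 / of_nat r * (ucol r s $$ (i, 0) * wrow r s $$ (0, j))
        = of_int (int r - int i - 1) * sx r s (int i + 1) * (of_int (int r - int j - 1) * sx r s (int r - int j - 1))
          / of_nat r"
      using ij by (simp add: ucol_def wrow_def diff_diff_eq add.commute)
  qed
  finally show "(- (X1 r s * X2 r s) + X3 r s * X4 r s - (1 / of_nat r) \<cdot>\<^sub>m (ucol r s * wrow r s)) $$ (i, j)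
      = mat (r - 1) (r - 1) (\<lambda>(i, j). lhs_entry r s i j) $$ (i, j)"
    using ij by simp
qed (simp_all add: X1_def X4_def ucol_def wrow_def)

lemma lhs_summand_Suc_Suc_Suc: "lhs_summand r s (Suc i) (Suc j) (Suc k) = lhs_summand r s i j k"
  by (simp add: lhs_summand_def algebra_simps)

lemma lhs_summand_reflect:
  "k \<le> r + i + j \<Longrightarrow> lhs_summand r s i j (r + i + j - k) = - lhs_summand r s i j k"
  by (simp add: lhs_summand_def of_nat_diff algebra_simps)

lemma lhs_summand_eq_0:
  assumes "r + min i j < k"
  shows "lhs_summand r s i j k = 0"
proof (cases "i \<le> j")
  case True
  then have "sx r s (int r + int i - int k) = 0" using assms by (intro sx_outside) simp
  then show ?thesis by (simp add: lhs_summand_def)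
next
  case False
  then have "sx r s (int k - int j) = 0" using assms by (intro sx_outside) simp
  then show ?thesis by (simp add: lhs_summand_def)
qed

lemma sum_lhs_summand_eq_0:
  "(\<Sum>k\<le>r + i + j. lhs_summand r s i j k :: 'a::field_char_0) = 0"
  by (rule sum_atMost_eq_0_if_antisymmetric) (simp add: lhs_summand_reflect)

lemma lhs_summand_r_minus_1:
  "r \<ge> 1 \<Longrightarrow> lhs_summand r s i j (r - 1)
     = of_int (int i + int j + 2 - int r) * sx r s (int i + 1) * sx r s (int r - int j - 1)"
  by (simp add: lhs_summand_def of_nat_diff algebra_simps)

lemma lhs_summand_r:
  "lhs_summand r s i j r = of_int (int i + int j - int r) * sx r s (int i) * sx r s (int r - int j)"
  by (simp add: lhs_summand_def algebra_simps)

lemma lhs_entry_eq_cross_term_if_0: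
  fixes s :: "nat \<Rightarrow> 'a::field_char_0"
  assumes r: "r \<ge> 1" and ij: "i = 0 \<or> j = 0"
  shows "lhs_entry r s i j = cross_term r s i j"
proof -
  let ?g = "lhs_summand r s i j"
  have "(\<Sum>k\<le>r + i + j. ?g k) = (\<Sum>k\<le>r. ?g k)"
    by (rule sum.mono_neutral_right) (use ij in \<open>auto intro!: lhs_summand_eq_0\<close>)
  also have "\<dots> = (\<Sum>k<r - 1. ?g k) + ?g (r - 1) + ?g r"
    using r by (cases r) (simp_all flip: lessThan_Suc_atMost)
  finally have "(\<Sum>k<r - 1. ?g k) + ?g (r - 1) + ?g r = 0"
    using sum_lhs_summand_eq_0[of r s i j] by simp
  then have sum_eq: "(\<Sum>k<r - 1. ?g k) = - ?g (r - 1) - ?g r"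
    by (simp add: eq_neg_iff_add_eq_0 algebra_simps)
  show ?thesis
    using r ij unfolding lhs_entry_def cross_term_def sum_eq lhs_summand_r_minus_1[OF r] lhs_summand_r
    by (auto simp: field_simps)
qed

lemma lhs_entry_Suc_Suc:
  fixes s :: "nat \<Rightarrow> 'a::field_char_0"
  assumes r: "r \<ge> 1"
  shows "lhs_entry r s (Suc i) (Suc j) - lhs_entry r s i j = cross_term r s (Suc i) (Suc j)"
proof -
  let ?g = "lhs_summand r s (Suc i) (Suc j)"
  have "?g 0 = 0"
    by (simp add: lhs_summand_def sx_outside)
  have "(\<Sum>k<r - 1. lhs_summand r s i j k) = (\<Sum>k<r - 1. ?g (Suc k))"
    by (simp add: lhs_summand_Suc_Suc_Suc)
  also have "\<dots> = (\<Sum>k<Suc (r - 1). ?g k)"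
    unfolding sum.lessThan_Suc_shift using \<open>?g 0 = 0\<close> by simp
  also have "\<dots> = (\<Sum>k<r - 1. ?g k) + ?g (r - 1)"
    by (rule sum.lessThan_Suc)
  finally have sum_eq: "(\<Sum>k<r - 1. lhs_summand r s i j k) = (\<Sum>k<r - 1. ?g k) + ?g (r - 1)" .
  show ?thesis
    using r unfolding lhs_entry_def cross_term_def sum_eq lhs_summand_r_minus_1[OF r]
    by (simp add: field_simps)
qed

lemma lhs_entry_diff_eq_cross_term:
  fixes s :: "nat \<Rightarrow> 'a::field_char_0"
  assumes "r \<ge> 1"
  shows "lhs_entry r s i j - (if i = 0 \<or> j = 0 then 0 else lhs_entry r s (i - 1) (j - 1))
    = cross_term r s i j"
proof (cases "i = 0 \<or> j = 0")
  case True
  then show ?thesis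
    using lhs_entry_eq_cross_term_if_0[OF assms] by simp
next
  case False
  then obtain i' j' where "i = Suc i'" "j = Suc j'"
    by (meson not0_implies_Suc)
  then show ?thesis
    using lhs_entry_Suc_Suc[OF assms] by simp
qed

lemma lhs_entry_last_row:
  assumes "r \<ge> 1"
  shows "lhs_entry r s (r - 1) j = 0"
proof -
  have "lhs_summand r s (r - 1) j k = 0" if "k < r - 1" for k
  proof -
    have "sx r s (int r + int (r - 1) - int k) = 0"
      using that by (intro sx_outside) linarith
    then show ?thesis
      by (simp add: lhs_summand_def)
  qed
  then show ?thesis
    using assms by (simp add: lhs_entry_def of_nat_diff)
qed

lemma lhs_entry_last_col:
  assumes "r \<ge> 1"
  shows "lhs_entry r s i (r - 1) = 0"
proof -
  have "lhs_summand r s i (r - 1) k = 0" if "k < r - 1" for k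
  proof -
    have "sx r s (int k - int (r - 1)) = 0"
      using that by (intro sx_outside) linarith
    then show ?thesis
      by (simp add: lhs_summand_def)
  qed
  then show ?thesis
    using assms by (simp add: lhs_entry_def of_nat_diff)
qed

lemma cross_term_eq_coeffs:
  fixes s :: "nat \<Rightarrow> 'a::field_char_0"
  assumes r: "r \<ge> 1" and a: "a \<le> r - 1" and b: "b \<le> r - 1"
  shows "coeff (pderiv (fpoly r s)) a * coeff (gpoly r s) b - coeff (gpoly r s) a * coeff (pderiv (fpoly r s)) b
    = cross_term r s (r - 1 - a) b"
proof -
  have "r \<noteq> 0" using r by simp
  have "a < r" "b < r" "int (r - 1 - a) = int r - 1 - int a"
    using a b r by auto
  then show ?thesis
    unfolding coeff_gpoly[OF \<open>r \<noteq> 0\<close>] coeff_pderiv_fpoly cross_term_def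
    by (simp add: field_simps of_nat_diff)
qed

lemma bez_poly_fpoly:
  fixes s :: "nat \<Rightarrow> 'a::field_char_0"
  assumes r: "r \<ge> 2"
  shows "bez_poly (pderiv (fpoly r s)) (gpoly r s) = bipoly (r - 1) (\<lambda>a b. lhs_entry r s (r - 2 - a) b)"
    (is "_ = ?Q")
proof (rule bez_poly_eqI)
  fix a b
  let ?F = "pderiv (fpoly r s)" and ?G = "gpoly r s" and ?q = "\<lambda>a b. coeff (coeff ?Q b) a"
  have G: "coeff ?G n = (if n \<le> r then (of_nat r - of_nat n) / of_nat r * sx r s (int r - int n) else 0)"
    for n using r by (intro coeff_gpoly) simp
  show "(if a = 0 then 0 else ?q (a - 1) b) - (if b = 0 then 0 else ?q a (b - 1))
      = coeff ?F a * coeff ?G b - coeff ?G a * coeff ?F b"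
  proof (cases "a < r \<and> b < r")
    case False
    then show ?thesis
      using r unfolding G by (auto simp: coeff_bipoly coeff_pderiv_fpoly)
  next
    case True
    define i where "i = r - 1 - a"
    have "(if a = 0 then 0 else ?q (a - 1) b) = lhs_entry r s i b"
      using True r lhs_entry_last_row[of r s b] lhs_entry_last_col[of r s i]
      by (cases "b = r - 1") (auto simp: coeff_bipoly i_def)
    moreover have "(if b = 0 then 0 else ?q a (b - 1))
        = (if i = 0 \<or> b = 0 then 0 else lhs_entry r s (i - 1) (b - 1))"
      using True r by (auto simp: coeff_bipoly i_def)
    ultimately have "(if a = 0 then 0 else ?q (a - 1) b) - (if b = 0 then 0 else ?q a (b - 1))
        = cross_term r s i b"
      using r lhs_entry_diff_eq_cross_term[of r s i b] by simp
    also have "\<dots> = coeff ?F a * coeff ?G b - coeff ?G a * coeff ?F b"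
      unfolding i_def using True r by (intro cross_term_eq_coeffs[symmetric]) auto
    finally show ?thesis .
  qed
qed

theorem proposition6:
  fixes r :: nat and s :: "nat \<Rightarrow> 'a::field_char_0"
  assumes "r \<ge> 2"
  shows "- (X1 r s * X2 r s) + X3 r s * X4 r s - (1 / of_nat r) \<cdot>\<^sub>m (ucol r s * wrow r s)
         = antidiag (r - 1) *
           bezout_matrix (pderiv (fpoly r s))
             (fpoly r s - Polynomial.smult (1 / of_nat r) ([:0, 1:] * pderiv (fpoly r s)))"
proof -
  have "max (degree (pderiv (fpoly r s))) (degree (gpoly r s)) = r - 1"
    using degree_pderiv_fpoly[of r s] degree_gpoly_le[of r s] assms by simp
  then have "bezout_matrix (pderiv (fpoly r s)) (gpoly r s)
      = mat (r - 1) (r - 1) (\<lambda>(a, b). lhs_entry r s (r - 2 - a) b)"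
    using bez_poly_fpoly[OF assms] by (rule bezout_matrix_eq_mat)
  also have "\<dots> = mat (r - 1) (r - 1) (\<lambda>(a, b). lhs_entry r s (r - 1 - 1 - a) b)"
    by (simp add: numeral_2_eq_2)
  finally show ?thesis
    by (simp only: lhs_eq_mat antidiag_mult_mat)
qed

end
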